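(* Let $G$ be a finite connected strongly regular graph that is not a complete graph $K_n$ ($n\ge2$) and that contains $C_3$ as a subgraph. Then $\mathrm{L}(G)$ is not strongly regular.
   Context: A finite simple graph on $v$ vertices is strongly regular with parameters $(v,k,\lambda,\mu)$, where $k,\lambda,\mu$ are nonnegative integers, if every vertex has degree $k$, every pair of adjacent vertices has exactly $\lambda$ common neighbours, and every pair of distinct non-adjacent vertices has exactly $\mu$ common neighbours. For a simple graph $G$, $\mathrm{L}(G)$ has vertex set $E(G)$, two vertices being adjacent iff the corresponding edges of $G$ share an endpoint. *)

theory Defs
  imports Main
begin

definition simple_graph :: "'a set \<Rightarrow> 'a set set \<Rightarrow> bool" where
  "simple_graph V E \<longleftrightarrow> finite V \<and>
     (\<forall>e\<in>E. \<exists>u v. u \<in> V \<and> v \<in> V \<and> u \<noteq> v \<and> e = {u, v})"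

definition adj :: "'a set set \<Rightarrow> 'a \<Rightarrow> 'a \<Rightarrow> bool" where
  "adj E u v \<longleftrightarrow> u \<noteq> v \<and> {u, v} \<in> E"

definition strongly_regular_with ::
  "'a set \<Rightarrow> 'a set set \<Rightarrow> nat \<Rightarrow> nat \<Rightarrow> nat \<Rightarrow> nat \<Rightarrow> bool" where
  "strongly_regular_with V E n k l m \<longleftrightarrow> simple_graph V E \<and> card V = n \<and>
     (\<forall>x\<in>V. card {y\<in>V. adj E x y} = k) \<and>
     (\<forall>x\<in>V. \<forall>y\<in>V. adj E x y \<longrightarrow> card {z\<in>V. adj E x z \<and> adj E y z} = l) \<and>
     (\<forall>x\<in>V. \<forall>y\<in>V. x \<noteq> y \<and> \<not> adj E x y \<longrightarrow> card {z\<in>V. adj E x z \<and> adj E y z} = m)"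

definition strongly_regular :: "'a set \<Rightarrow> 'a set set \<Rightarrow> bool" where
  "strongly_regular V E \<longleftrightarrow> (\<exists>n k l m. strongly_regular_with V E n k l m)"

definition connected_graph :: "'a set \<Rightarrow> 'a set set \<Rightarrow> bool" where
  "connected_graph V E \<longleftrightarrow> V \<noteq> {} \<and>
     (\<forall>u\<in>V. \<forall>v\<in>V. (\<lambda>x y. x \<in> V \<and> y \<in> V \<and> adj E x y)\<^sup>*\<^sup>* u v)"

definition complete_graph :: "'a set \<Rightarrow> 'a set set \<Rightarrow> bool" where
  "complete_graph V E \<longleftrightarrow> (\<forall>u\<in>V. \<forall>v\<in>V. u \<noteq> v \<longrightarrow> adj E u v)"

definition has_triangle :: "'a set \<Rightarrow> 'a set set \<Rightarrow> bool" where
  "has_triangle V E \<longleftrightarrow> (\<exists>a\<in>V. \<exists>b\<in>V. \<exists>c\<in>V. adj E a b \<and> adj E b c \<and> adj E a c)"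

text \<open>Line graph: vertices are the edges of G, two distinct edges adjacent iff they share an endpoint.\<close>

definition line_graph_edges :: "'a set set \<Rightarrow> 'a set set set" where
  "line_graph_edges E = {{e, f} | e f. e \<in> E \<and> f \<in> E \<and> e \<noteq> f \<and> e \<inter> f \<noteq> {}}"

end

theory Submission
  imports Defs
begin

text \<open>Two edges of \<open>L(G)\<close> through a common vertex u of degree d, say uv and uw, have as
  common neighbours the other d - 2 edges at u, together with vw if v and w are adjacent.
  A triangle therefore forces \<open>\<lambda> = d - 1\<close> in \<open>L(G)\<close>, while an induced path v-u-w, which exists
  in every connected non-complete graph, forces \<open>\<lambda> = d - 2\<close>. In a regular graph d is the same
  at every vertex, so \<open>L(G)\<close> cannot have a constant \<open>\<lambda>\<close>.\<close>

lemma adj_line_graph_edges_iff: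
  "adj (line_graph_edges E) e f \<longleftrightarrow> e \<noteq> f \<and> e \<in> E \<and> f \<in> E \<and> e \<inter> f \<noteq> {}"
  unfolding adj_def line_graph_edges_def by (auto simp: doubleton_eq_iff)

lemma simple_graph_finite_edges:
  assumes "simple_graph V E"
  shows "finite E"
proof -
  have "E \<subseteq> Pow V" "finite V"
    using assms unfolding simple_graph_def by fastforce+
  then show ?thesis by (meson finite_Pow_iff rev_finite_subset)
qed

lemma card_edges_at_vertex:
  assumes "simple_graph V E" and "u \<in> V"
  shows "card {e\<in>E. u \<in> e} = card {y\<in>V. adj E u y}"
proof -
  have "{e\<in>E. u \<in> e} = (\<lambda>y. {u, y}) ` {y\<in>V. adj E u y}"
  proof (intro equalityI subsetI)
    fix e assume e: "e \<in> {e\<in>E. u \<in> e}"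
    then obtain a b where "a \<in> V" "b \<in> V" "a \<noteq> b" "e = {a, b}"
      using assms(1) unfolding simple_graph_def by blast
    with e show "e \<in> (\<lambda>y. {u, y}) ` {y\<in>V. adj E u y}"
      by (cases "u = a") (auto simp: adj_def insert_commute)
  qed (auto simp: adj_def)
  moreover have "inj_on (\<lambda>y. {u, y}) {y\<in>V. adj E u y}"
    by (auto simp: inj_on_def doubleton_eq_iff adj_def)
  ultimately show ?thesis by (simp add: card_image)
qed

lemma common_line_neighbours_eq:
  assumes "simple_graph V E" and "adj E u v" and "adj E u w" and "v \<noteq> w"
  shows "{z\<in>E. adj (line_graph_edges E) {u, v} z \<and> adj (line_graph_edges E) {u, w} z}
       = ({e\<in>E. u \<in> e} - {{u, v}, {u, w}}) \<union> (if adj E v w then {{v, w}} else {})"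
    (is "?C = ?R")
proof (intro equalityI subsetI)
  fix z assume "z \<in> ?C"
  then have z: "z \<in> E" "z \<noteq> {u, v}" "z \<noteq> {u, w}" "z \<inter> {u, v} \<noteq> {}" "z \<inter> {u, w} \<noteq> {}"
    by (auto simp: adj_line_graph_edges_iff)
  obtain a b where "a \<noteq> b" "z = {a, b}"
    using assms(1) z(1) unfolding simple_graph_def by blast
  with z assms(4) show "z \<in> ?R"
    by (cases "u \<in> z") (auto simp: adj_def insert_commute)
next
  fix z assume "z \<in> ?R"
  have uv: "u \<noteq> v" "u \<noteq> w" "{u, v} \<in> E" "{u, w} \<in> E"
    using assms(2,3) by (auto simp: adj_def)
  show "z \<in> ?C"
  proof (cases "u \<in> z")
    case True
    with \<open>z \<in> ?R\<close> uv show ?thesis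
      by (auto simp: adj_line_graph_edges_iff split: if_splits)
  next
    case False
    with \<open>z \<in> ?R\<close> have "z = {v, w}" "{v, w} \<in> E"
      by (auto simp: adj_def split: if_splits)
    with uv assms(4) show ?thesis
      by (auto simp: adj_line_graph_edges_iff doubleton_eq_iff)
  qed
qed

lemma card_common_line_neighbours:
  assumes "simple_graph V E" and "u \<in> V" and "adj E u v" and "adj E u w" and "v \<noteq> w"
  shows "card {z\<in>E. adj (line_graph_edges E) {u, v} z \<and> adj (line_graph_edges E) {u, w} z}
       = (if adj E v w then card {y\<in>V. adj E u y} - 1 else card {y\<in>V. adj E u y} - 2)"
proof -
  let ?S = "{e\<in>E. u \<in> e}"
  have "finite ?S" using simple_graph_finite_edges[OF assms(1)] by simp
  have sub: "{{u, v}, {u, w}} \<subseteq> ?S" and "{u, v} \<noteq> {u, w}" "{v, w} \<notin> ?S"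
    using assms(3-5) by (auto simp: adj_def doubleton_eq_iff)
  then have "card (?S - {{u, v}, {u, w}}) = card ?S - 2" "card ?S \<ge> 2"
    using card_Diff_subset[OF _ sub] card_mono[OF \<open>finite ?S\<close> sub] \<open>finite ?S\<close> by auto
  with \<open>{v, w} \<notin> ?S\<close> \<open>finite ?S\<close> show ?thesis
    unfolding common_line_neighbours_eq[OF assms(1,3-5)] card_edges_at_vertex[OF assms(1,2), symmetric]
    by auto
qed

lemma adj_commute: "adj E u v \<longleftrightarrow> adj E v u"
  unfolding adj_def by (auto simp: insert_commute)

lemma connected_not_complete_induced_path:
  assumes "connected_graph V E" and "\<not> complete_graph V E"
  obtains u v w where "u \<in> V" "v \<in> V" "w \<in> V" "adj E u v" "adj E u w" "v \<noteq> w" "\<not> adj E v w"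
proof (rule ccontr)
  assume "\<not> thesis"
  with that have clique: "\<And>u v w. u \<in> V \<Longrightarrow> v \<in> V \<Longrightarrow> w \<in> V \<Longrightarrow> adj E u v \<Longrightarrow> adj E u w
      \<Longrightarrow> v \<noteq> w \<Longrightarrow> adj E v w"
    by blast
  obtain a b where a: "a \<in> V" and b: "b \<in> V" "a \<noteq> b" "\<not> adj E a b"
    using assms(2) unfolding complete_graph_def by blast
  have "(\<lambda>x y. x \<in> V \<and> y \<in> V \<and> adj E x y)\<^sup>*\<^sup>* a b"
    using assms(1) a b unfolding connected_graph_def by blast
  then have "b = a \<or> adj E a b"
  proof (induction rule: rtranclp_induct)
    case (step y z)
    then show ?case
      using clique[of y a z] a by (cases "y = a"; cases "z = a") (auto simp: adj_commute)
  qed simp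
  with b show False by blast
qed

lemma regular_graph_line_graph_not_strongly_regular:
  assumes "simple_graph V E" and regular: "\<And>x. x \<in> V \<Longrightarrow> card {y\<in>V. adj E x y} = k"
    and "connected_graph V E" and "\<not> complete_graph V E" and "has_triangle V E"
  shows "\<not> strongly_regular E (line_graph_edges E)"
proof
  assume "strongly_regular E (line_graph_edges E)"
  then obtain nL kL lL mL where "strongly_regular_with E (line_graph_edges E) nL kL lL mL"
    unfolding strongly_regular_def by blast
  then have lL: "\<And>e f. e \<in> E \<Longrightarrow> f \<in> E \<Longrightarrow> adj (line_graph_edges E) e f \<Longrightarrow>
      card {z\<in>E. adj (line_graph_edges E) e z \<and> adj (line_graph_edges E) f z} = lL"
    unfolding strongly_regular_with_def by blast
  obtain a b c where abc: "a \<in> V" "b \<in> V" "c \<in> V" "adj E a b" "adj E b c" "adj E a c"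
    using assms(5) unfolding has_triangle_def by blast
  obtain u v w where uvw: "u \<in> V" "adj E u v" "adj E u w" "v \<noteq> w" "\<not> adj E v w"
    using connected_not_complete_induced_path[OF assms(3,4)] by blast
  have "b \<noteq> c" using abc(5) by (simp add: adj_def)
  have "{a, b} \<in> E" "{a, c} \<in> E"
    using abc by (simp_all add: adj_def)
  moreover from this have "adj (line_graph_edges E) {a, b} {a, c}"
    using \<open>b \<noteq> c\<close> by (auto simp: adj_line_graph_edges_iff doubleton_eq_iff)
  ultimately have lambda_triangle: "k - 1 = lL"
    using lL card_common_line_neighbours[OF assms(1) abc(1,4,6) \<open>b \<noteq> c\<close>] abc(5) regular[OF abc(1)]
    by simp
  have "{u, v} \<in> E" "{u, w} \<in> E"
    using uvw by (simp_all add: adj_def)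
  moreover from this have "adj (line_graph_edges E) {u, v} {u, w}"
    using uvw(4) by (auto simp: adj_line_graph_edges_iff doubleton_eq_iff)
  ultimately have lambda_induced_path: "k - 2 = lL"
    using lL card_common_line_neighbours[OF assms(1) uvw(1-4)] uvw(5) regular[OF uvw(1)]
    by simp
  have "k \<ge> 2"
  proof -
    have "finite V" using assms(1) unfolding simple_graph_def by blast
    then have "card {b, c} \<le> card {y\<in>V. adj E a y}"
      using abc by (intro card_mono) auto
    with \<open>b \<noteq> c\<close> regular[OF abc(1)] show ?thesis by simp
  qed
  with lambda_triangle lambda_induced_path show False by simp
qed

theorem mainTheorem7:
  fixes V :: "'a set" and E :: "'a set set"
  assumes "strongly_regular V E"
    and "connected_graph V E"
    and "\<not> (complete_graph V E \<and> card V \<ge> 2)"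
    and "has_triangle V E"
  shows "\<not> strongly_regular E (line_graph_edges E)"
proof -
  obtain n k l m where "strongly_regular_with V E n k l m"
    using assms(1) unfolding strongly_regular_def by blast
  then have sg: "simple_graph V E" and "\<And>x. x \<in> V \<Longrightarrow> card {y\<in>V. adj E x y} = k"
    unfolding strongly_regular_with_def by auto
  obtain a b where "a \<in> V" "b \<in> V" "a \<noteq> b"
    using assms(4) unfolding has_triangle_def adj_def by blast
  then have "card V \<ge> 2"
    using sg card_mono[of V "{a, b}"] unfolding simple_graph_def by auto
  with assms(3) have "\<not> complete_graph V E" by simp
  show ?thesis
    by (rule regular_graph_line_graph_not_strongly_regular) fact+
qed

end
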